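(* Let $r\ge3$ be an integer and $\lambda\in[\frac15,1]$. Then for all $0<\epsilon\le1$, $f_{r,\lambda}(\epsilon)<\lambda^2$, where $f_{r,\lambda}(\epsilon)=\frac{1}{r-1}\sum_{i=1}^{r-1}\binom{r-1}{i}(1-\epsilon)^{r-1-i}\epsilon^{i-1}\frac{\lambda^2}{\lambda+(1-\lambda)2^{1-i}}$. *)

theory Defs
  imports Complex_Main
begin

definition f_rl :: "nat \<Rightarrow> real \<Rightarrow> real \<Rightarrow> real" where
  "f_rl r lam eps = (1 / real (r - 1)) *
     (\<Sum>i=1..r-1. real ((r - 1) choose i) * (1 - eps) ^ (r - 1 - i) * eps ^ (i - 1) *
        (lam\<^sup>2 / (lam + (1 - lam) * 2 powr (1 - real i))))"

end

theory Submission
  imports Defs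
begin

text \<open>Substituting \<open>j = i - 1\<close> and using \<open>(n+1 choose j+1) / (n+1) = (n choose j) / (j+1)\<close>,
  \<open>f\<close> becomes the average of \<open>\<lambda>\<^sup>2 / ((j+1)(\<lambda> + (1-\<lambda>) 2\<^sup>-\<^sup>j))\<close> under the binomial
  distribution with parameters \<open>r - 2\<close> and \<open>\<epsilon>\<close>. The denominator equals \<open>1\<close> at \<open>j = 0\<close> and
  exceeds \<open>1\<close> for \<open>j \<ge> 1\<close> (for \<open>j \<ge> 4\<close> because \<open>(j+1)\<lambda> \<ge> 5\<lambda> \<ge> 1\<close>), and since
  \<open>\<epsilon> > 0\<close> the outcome \<open>j = r - 2 \<ge> 1\<close> has positive probability.\<close>

lemma binomial_weights_sum:
  fixes p :: real
  shows "(\<Sum>j\<le>n. real (n choose j) * (1 - p) ^ (n - j) * p ^ j) = 1"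
proof -
  have "(\<Sum>j\<le>n. real (n choose j) * (1 - p) ^ (n - j) * p ^ j) = (p + (1 - p)) ^ n"
    by (subst binomial_ring) (simp add: mult_ac)
  then show ?thesis by simp
qed

lemma of_nat_choose_Suc_Suc_div:
  "real (Suc n choose Suc k) / real (Suc n) = real (n choose k) / real (Suc k)"
  using Suc_times_binomial_eq[of n k]
  by (simp add: field_simps flip: of_nat_mult del: binomial_Suc_Suc)

lemma f_rl_as_binomial_average:
  "f_rl (Suc (Suc m)) lam eps = (\<Sum>j\<le>m. real (m choose j) * (1 - eps) ^ (m - j) * eps ^ j *
      (lam\<^sup>2 / (real (Suc j) * (lam + (1 - lam) / 2 ^ j))))"
proof -
  have "f_rl (Suc (Suc m)) lam eps = (\<Sum>j\<le>m. real (Suc m choose Suc j) / real (Suc m) *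
      (1 - eps) ^ (m - j) * eps ^ j * (lam\<^sup>2 / (lam + (1 - lam) / 2 ^ j)))"
    unfolding f_rl_def sum_distrib_left diff_Suc_1
    by (simp only: One_nat_def sum.atLeast_Suc_atMost_Suc_shift atMost_atLeast0)
       (simp add: powr_minus_divide powr_realpow del: binomial_Suc_Suc)
  also have "\<dots> = (\<Sum>j\<le>m. real (m choose j) * (1 - eps) ^ (m - j) * eps ^ j *
      (lam\<^sup>2 / (real (Suc j) * (lam + (1 - lam) / 2 ^ j))))"
    by (simp only: of_nat_choose_Suc_Suc_div) (simp add: mult_ac divide_divide_eq_left')
  finally show ?thesis .
qed

lemma weighted_average_less:
  fixes w q :: "'a \<Rightarrow> real"
  assumes "finite A" and "sum w A = 1" and "\<And>x. x \<in> A \<Longrightarrow> 0 \<le> w x"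
    and "\<And>x. x \<in> A \<Longrightarrow> q x \<le> c"
    and "k \<in> A" and "0 < w k" and "q k < c"
  shows "(\<Sum>x\<in>A. w x * q x) < c"
proof -
  have "(\<Sum>x\<in>A. w x * q x) < (\<Sum>x\<in>A. w x * c)"
  proof (rule sum_strict_mono_ex1)
    show "\<forall>x\<in>A. w x * q x \<le> w x * c"
      using assms(3,4) by (simp add: mult_left_mono)
    show "\<exists>x\<in>A. w x * q x < w x * c"
      using assms(5-7) by (intro bexI[of _ k]) simp_all
  qed (fact assms(1))
  also have "\<dots> = c"
    using assms(2) by (simp flip: sum_distrib_right)
  finally show ?thesis .
qed

lemma one_less_Suc_mult_interpolated_power:
  fixes lam :: real
  assumes "1/5 \<le> lam" and "lam \<le> 1" and "1 \<le> j"
  shows "1 < real (Suc j) * (lam + (1 - lam) / 2 ^ j)"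
proof -
  \<comment> \<open>for \<open>j = 1, 2, 3\<close> the claim reads \<open>\<lambda> > 0\<close>, \<open>\<lambda> > 1/9\<close>, \<open>\<lambda> > 1/7\<close>\<close>
  consider "j = 1" | "j = 2" | "j = 3" | "4 \<le> j"
    using assms(3) by linarith
  then show ?thesis
  proof cases
    case 4
    have split: "real (Suc j) * (lam + (1 - lam) / 2 ^ j)
        = real (Suc j) * lam + real (Suc j) * ((1 - lam) / 2 ^ j)"
      by (simp add: distrib_left)
    have "5 * lam \<le> real (Suc j) * lam"
      using 4 assms(1) by (intro mult_right_mono) auto
    show ?thesis
    proof (cases "lam < 1")
      case True
      then have "0 < real (Suc j) * ((1 - lam) / 2 ^ j)"
        by simp
      with \<open>5 * lam \<le> real (Suc j) * lam\<close> show ?thesis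
        using assms(1) split by linarith
    next
      case False
      with assms(2) 4 show ?thesis
        by simp
    qed
  qed (use assms in \<open>simp_all add: field_simps\<close>)
qed

lemma binomial_average_term_le:
  fixes lam :: real
  assumes "1/5 \<le> lam" and "lam \<le> 1"
  shows "lam\<^sup>2 / (real (Suc j) * (lam + (1 - lam) / 2 ^ j)) \<le> lam\<^sup>2"
    and "1 \<le> j \<Longrightarrow> lam\<^sup>2 / (real (Suc j) * (lam + (1 - lam) / 2 ^ j)) < lam\<^sup>2"
proof -
  have "0 < lam\<^sup>2"
    using assms(1) by simp
  moreover have "1 \<le> real (Suc j) * (lam + (1 - lam) / 2 ^ j)"
    using one_less_Suc_mult_interpolated_power[OF assms, of j] by (cases "j = 0") auto
  ultimately show "lam\<^sup>2 / (real (Suc j) * (lam + (1 - lam) / 2 ^ j)) \<le> lam\<^sup>2"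
    by (simp add: divide_le_eq mult_le_cancel_left1)
  assume "1 \<le> j"
  with \<open>0 < lam\<^sup>2\<close> show "lam\<^sup>2 / (real (Suc j) * (lam + (1 - lam) / 2 ^ j)) < lam\<^sup>2"
    using one_less_Suc_mult_interpolated_power[OF assms] by (simp add: divide_less_eq)
qed

theorem mainTheorem7:
  fixes r :: nat and lam eps :: real
  assumes "r \<ge> 3" and "1/5 \<le> lam" and "lam \<le> 1"
    and "0 < eps" and "eps \<le> 1"
  shows "f_rl r lam eps < lam\<^sup>2"
proof -
  define m where "m = r - 2"
  have r: "r = Suc (Suc m)" and m: "1 \<le> m"
    using assms(1) unfolding m_def by simp_all
  define w where "w j = real (m choose j) * (1 - eps) ^ (m - j) * eps ^ j" for j
  define q where "q j = lam\<^sup>2 / (real (Suc j) * (lam + (1 - lam) / 2 ^ j))" for j :: nat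
  have "f_rl r lam eps = (\<Sum>j\<le>m. w j * q j)"
    unfolding r f_rl_as_binomial_average w_def q_def ..
  also have "\<dots> < lam\<^sup>2"
  proof (rule weighted_average_less)
    show "sum w {..m} = 1"
      unfolding w_def by (rule binomial_weights_sum)
    show "0 \<le> w j" for j
      unfolding w_def using assms(4,5) by simp
    show "q j \<le> lam\<^sup>2" for j
      unfolding q_def using binomial_average_term_le(1)[OF assms(2,3)] .
    show "0 < w m"
      unfolding w_def using assms(4) by simp
    show "q m < lam\<^sup>2"
      unfolding q_def using binomial_average_term_le(2)[OF assms(2,3) m] .
  qed auto
  finally show ?thesis .
qed

end
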